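(* For $i=1,2$ let $R_i$ be a unital ring whose additive group is finitely generated and torsion-free, and let $M_i\subseteq R_i^\times$ be a submonoid. Suppose there are $\mathbb Q$-algebra isomorphisms $\varphi_1\colon\mathbb QR_1\to\mathbb QR_2$ and $\varphi_2\colon\mathbb QR_2\to\mathbb QR_1$ with $\varphi_1(\langle M_1\rangle)\subseteq\langle M_2\rangle$ and $\varphi_2(\langle M_2\rangle)\subseteq\langle M_1\rangle$. If (S') every $\mathbb Q$-algebra automorphism $\psi$ of $\mathbb QR_1$ with $\psi(\langle M_1\rangle)\subseteq\langle M_1\rangle$ satisfies $\psi(\langle M_1\rangle)=\langle M_1\rangle$, then $\varphi_1(\langle M_1\rangle)=\langle M_2\rangle$ and $\varphi_2(\langle M_2\rangle)=\langle M_1\rangle$, so that the actions $\langle M_1\rangle\curvearrowright\mathbb QR_1$ and $\langle M_2\rangle\curvearrowright\mathbb QR_2$ by left multiplication are isomorphic. If (N) $M_i=\langle M_i\rangle\cap\mathcal O_i$ for $i=1,2$, and (S) every $\mathbb Q$-algebra automorphism $\psi$ of $\mathbb QR_1$ with $\psi(M_1)\subseteq M_1$ satisfies $\psi(M_1)=M_1$, then $\varphi_1(M_1)=M_2$ and $\varphi_2(M_2)=M_1$; consequently the actions $M_1\curvearrowright{\rm span}_{\mathbb Z}(M_1)$ and $M_2\curvearrowright{\rm span}_{\mathbb Z}(M_2)$ by left multiplication are isomorphic, and if each $\mathcal O_i$ is closed under addition and invariant under left multiplication by $M_i$, then $M_1\curvearrowright\mathcal O_1$ and $M_2\curvearrowright\mathcal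 O_2$ are isomorphic.
   Context: $\mathbb QR=\mathbb Q\otimes_{\mathbb Z}R$. $R^\times$ is the monoid of left regular elements of $R$; $\langle M\rangle$ is the subgroup of $(\mathbb QR)^*$ generated by $M$. $\mathcal O_i$ is the set of elements of $\mathbb QR_i$ integral over $\mathbb Z$. Two actions $\sigma\colon S\curvearrowright A$, $\tau\colon T\curvearrowright B$ of monoids on abelian groups are isomorphic if there are a monoid isomorphism $\mathfrak t\colon S\to T$ and a group isomorphism $\mathfrak b\colon A\to B$ with $\mathfrak b(\sigma_s(x))=\tau_{\mathfrak t(s)}(\mathfrak b(x))$. *)

theory Defs
  imports Main
begin

text \<open>
  The rational envelope QR = Q tensor R of a ring R whose additive group is finitely
  generated and torsion-free is modelled as an ambient ring type 'a in which every
  nonzero integer is invertible (this is exactly a unital Q-algebra structure, which is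
  then unique), and R is a subring of 'a that is a finitely generated additive group
  and spans 'a over Q.  For torsion-free R the canonical map Q tensor R to 'a is then an
  isomorphism, so R is identified with its image in QR, as in the paper.
\<close>

definition Q_algebra :: "'a::ring_1 itself \<Rightarrow> bool" where
  "Q_algebra _ \<longleftrightarrow>
     (\<forall>n::int. n \<noteq> 0 \<longrightarrow> (\<exists>y::'a. of_int n * y = 1 \<and> y * of_int n = 1))"

definition zspan :: "'a::ring_1 set \<Rightarrow> 'a set" where
  "zspan S = {(\<Sum>x\<in>F. of_int (c x) * x) | F c. finite F \<and> F \<subseteq> S}"

definition order_in :: "'a::ring_1 set \<Rightarrow> bool" where
  "order_in R \<longleftrightarrow>
     1 \<in> R \<and> (\<forall>x\<in>R. \<forall>y\<in>R. x + y \<in> R \<and> x * y \<in> R \<and> - x \<in> R)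
     \<and> (\<exists>F. finite F \<and> F \<subseteq> R \<and> zspan F = R)
     \<and> (\<forall>a::'a. \<exists>n::int. n \<noteq> 0 \<and> of_int n * a \<in> R)"

definition left_regular :: "'a::ring_1 set \<Rightarrow> 'a set" where
  "left_regular R = {r \<in> R. \<forall>x\<in>R. r * x = 0 \<longrightarrow> x = 0}"

definition submonoid :: "'a::ring_1 set \<Rightarrow> bool" where
  "submonoid M \<longleftrightarrow> 1 \<in> M \<and> (\<forall>x\<in>M. \<forall>y\<in>M. x * y \<in> M)"

inductive_set gen_group :: "'a::ring_1 set \<Rightarrow> 'a set" for M where
  gen_base: "x \<in> M \<Longrightarrow> x \<in> gen_group M"
| gen_one: "1 \<in> gen_group M"
| gen_mult: "x \<in> gen_group M \<Longrightarrow> y \<in> gen_group M \<Longrightarrow> x * y \<in> gen_group M"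
| gen_inv: "x \<in> gen_group M \<Longrightarrow> x * y = 1 \<Longrightarrow> y * x = 1 \<Longrightarrow> y \<in> gen_group M"

definition integral_elems :: "'a::ring_1 set" where
  "integral_elems = {x. \<exists>(n::nat) (c::nat \<Rightarrow> int). x ^ n + (\<Sum>i<n. of_int (c i) * x ^ i) = 0}"

text \<open>Q-algebra isomorphisms between Q-algebras are exactly unital ring isomorphisms
  (additive maps between Q-vector spaces are automatically Q-linear).\<close>
definition Qalg_iso :: "('a::ring_1 \<Rightarrow> 'b::ring_1) \<Rightarrow> bool" where
  "Qalg_iso f \<longleftrightarrow> bij f \<and> f 1 = 1 \<and> (\<forall>x y. f (x + y) = f x + f y)
                  \<and> (\<forall>x y. f (x * y) = f x * f y)"

definition lmult_actions_iso :: "'a::ring_1 set \<Rightarrow> 'a set \<Rightarrow> 'b::ring_1 set \<Rightarrow> 'b set \<Rightarrow> bool" where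
  "lmult_actions_iso S A T B \<longleftrightarrow>
     (\<exists>t b. bij_betw t S T \<and> t 1 = 1 \<and> (\<forall>s\<in>S. \<forall>s'\<in>S. t (s * s') = t s * t s')
          \<and> bij_betw b A B \<and> (\<forall>x\<in>A. \<forall>y\<in>A. b (x + y) = b x + b y)
          \<and> (\<forall>s\<in>S. \<forall>x\<in>A. b (s * x) = t s * b x))"

end

theory Submission
  imports Defs
begin

text \<open>
  For \<open>\<psi> = \<phi>\<^sub>2 \<circ> \<phi>\<^sub>1\<close> the two inclusions give \<open>\<psi>(X\<^sub>1) \<subseteq> \<phi>\<^sub>2(X\<^sub>2) \<subseteq> X\<^sub>1\<close>, and the
  surjectivity hypothesis on self-maps of \<open>X\<^sub>1\<close> turns this chain into equalities; injectivity
  of \<open>\<phi>\<^sub>2\<close> then forces \<open>\<phi>\<^sub>1(X\<^sub>1) = X\<^sub>2\<close>.  This is applied to \<open>X\<^sub>i = \<langle>M\<^sub>i\<rangle>\<close> and to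
  \<open>X\<^sub>i = M\<^sub>i\<close>; in the second case the inclusions \<open>\<phi>\<^sub>1(M\<^sub>1) \<subseteq> M\<^sub>2\<close>, \<open>\<phi>\<^sub>2(M\<^sub>2) \<subseteq> M\<^sub>1\<close> come
  from (N), because ring isomorphisms preserve integrality over \<open>\<int>\<close>.  All action
  isomorphisms are restrictions of \<open>\<phi>\<^sub>1\<close>.
\<close>

context
  fixes f :: "'a::ring_1 \<Rightarrow> 'b::ring_1"
  assumes iso: "Qalg_iso f"
begin

lemma Qalg_iso_add: "f (x + y) = f x + f y"
  and Qalg_iso_mult: "f (x * y) = f x * f y"
  and Qalg_iso_one: "f 1 = 1"
  and Qalg_iso_inj: "inj f"
  and Qalg_iso_surj: "surj f"
  using iso unfolding Qalg_iso_def bij_def by auto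

lemma Qalg_iso_zero: "f 0 = 0"
  using Qalg_iso_add[of 0 0] by simp

lemma Qalg_iso_minus: "f (- x) = - f x"
  using Qalg_iso_add[of x "- x"] by (simp add: Qalg_iso_zero eq_neg_iff_add_eq_0 add.commute)

lemma Qalg_iso_sum: "f (sum g F) = (\<Sum>x\<in>F. f (g x))"
  by (induction F rule: infinite_finite_induct) (simp_all add: Qalg_iso_zero Qalg_iso_add)

lemma Qalg_iso_of_int: "f (of_int n) = of_int n"
proof -
  have "f (of_nat m) = of_nat m" for m
    by (induction m) (simp_all add: Qalg_iso_zero Qalg_iso_one Qalg_iso_add)
  then show ?thesis
    by (cases n rule: int_cases2) (simp_all add: Qalg_iso_minus)
qed

lemma Qalg_iso_power: "f (x ^ n) = f x ^ n"
  by (induction n) (simp_all add: Qalg_iso_one Qalg_iso_mult)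

lemma Qalg_iso_integral_elems_iff: "f x \<in> integral_elems \<longleftrightarrow> x \<in> integral_elems"
proof -
  have "f x ^ n + (\<Sum>i<n. of_int (c i) * f x ^ i) = 0 \<longleftrightarrow>
        x ^ n + (\<Sum>i<n. of_int (c i) * x ^ i) = 0" for n c
    using inj_eq[OF Qalg_iso_inj, of "x ^ n + (\<Sum>i<n. of_int (c i) * x ^ i)" 0]
    by (simp add: Qalg_iso_add Qalg_iso_mult Qalg_iso_sum Qalg_iso_of_int Qalg_iso_power
        Qalg_iso_zero)
  then show ?thesis
    unfolding integral_elems_def by simp
qed

lemma Qalg_iso_image_integral_elems: "f ` integral_elems = integral_elems"
proof (intro equalityI subsetI)
  fix y :: 'b assume "y \<in> integral_elems"
  moreover obtain x where "y = f x"
    using Qalg_iso_surj by (metis surjD)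
  ultimately show "y \<in> f ` integral_elems"
    using Qalg_iso_integral_elems_iff by blast
qed (auto simp: Qalg_iso_integral_elems_iff)

lemma Qalg_iso_image_Int_integral_elems:
  assumes "f ` G \<subseteq> H"
  shows "f ` (G \<inter> integral_elems) \<subseteq> H \<inter> integral_elems"
  using assms Qalg_iso_integral_elems_iff by auto

lemma Qalg_iso_lincomb: "f (\<Sum>x\<in>F. of_int (c x) * x) = (\<Sum>x\<in>F. of_int (c x) * f x)"
  by (simp add: Qalg_iso_sum Qalg_iso_mult Qalg_iso_of_int)

lemma Qalg_iso_image_zspan: "f ` zspan S = zspan (f ` S)"
proof (intro equalityI subsetI)
  fix y assume "y \<in> f ` zspan S"
  then obtain F c where F: "finite F" "F \<subseteq> S" and y: "y = f (\<Sum>x\<in>F. of_int (c x) * x)"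
    unfolding zspan_def by auto
  have "inj_on f F"
    using Qalg_iso_inj by (rule inj_on_subset) simp
  then have "y = (\<Sum>z\<in>f ` F. of_int (c (inv_into F f z)) * z)"
    by (simp add: y Qalg_iso_lincomb sum.reindex)
  with F show "y \<in> zspan (f ` S)"
    unfolding zspan_def
    by (intro CollectI exI[of _ "f ` F"] exI[of _ "\<lambda>z. c (inv_into F f z)"]) auto
next
  fix y assume "y \<in> zspan (f ` S)"
  then obtain G c where G: "finite G" "G \<subseteq> f ` S" and y: "y = (\<Sum>x\<in>G. of_int (c x) * x)"
    unfolding zspan_def by auto
  obtain U where U: "U \<subseteq> S" "inj_on f U" "G = f ` U"
    using G(2) subset_image_inj by metis
  with G(1) have "finite U"
    using finite_image_iff by metis
  with U(1) have "(\<Sum>x\<in>U. of_int (c (f x)) * x) \<in> zspan S"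
    unfolding zspan_def by (intro CollectI exI[of _ U] exI[of _ "c \<circ> f"]) auto
  moreover have "y = f (\<Sum>x\<in>U. of_int (c (f x)) * x)"
    using y U by (simp add: Qalg_iso_lincomb sum.reindex)
  ultimately show "y \<in> f ` zspan S"
    by blast
qed

lemma lmult_actions_iso_Qalg_iso:
  assumes "f ` S = T" "f ` A = B"
  shows "lmult_actions_iso S A T B"
  unfolding lmult_actions_iso_def
proof (intro exI[of _ f] conjI)
  have "inj_on f X" for X
    using Qalg_iso_inj by (rule inj_on_subset) simp
  then show "bij_betw f S T" "bij_betw f A B"
    using assms by (auto simp: bij_betw_def)
qed (simp_all add: Qalg_iso_add Qalg_iso_mult Qalg_iso_one)

end

lemma Qalg_iso_comp:
  assumes "Qalg_iso f" "Qalg_iso g"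
  shows "Qalg_iso (g \<circ> f)"
  using assms unfolding Qalg_iso_def by (auto intro: bij_comp)

lemma image_eqs_if_comp_image_eq:
  assumes "inj g" "f ` X \<subseteq> Y" "g ` Y \<subseteq> X" "(g \<circ> f) ` X = X"
  shows "f ` X = Y" "g ` Y = X"
proof -
  have gfX: "g ` f ` X = X"
    using assms(4) by (simp add: image_comp)
  with assms(2,3) show gY: "g ` Y = X"
    by blast
  with gfX have "g ` f ` X = g ` Y"
    by simp
  then show "f ` X = Y"
    using assms(1) by (simp add: inj_image_eq_iff)
qed

lemma Qalg_iso_images_eq_if_endo_surjective:
  fixes \<phi>1 :: "'a::ring_1 \<Rightarrow> 'b::ring_1" and \<phi>2 :: "'b \<Rightarrow> 'a"
  assumes "Qalg_iso \<phi>1" "Qalg_iso \<phi>2"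
    and "\<phi>1 ` X1 \<subseteq> X2" "\<phi>2 ` X2 \<subseteq> X1"
    and "\<forall>\<psi>::'a \<Rightarrow> 'a. Qalg_iso \<psi> \<and> \<psi> ` X1 \<subseteq> X1 \<longrightarrow> \<psi> ` X1 = X1"
  shows "\<phi>1 ` X1 = X2" "\<phi>2 ` X2 = X1"
proof -
  have "(\<phi>2 \<circ> \<phi>1) ` X1 \<subseteq> X1"
    using assms(3,4) by (auto simp: image_comp[symmetric])
  then have "(\<phi>2 \<circ> \<phi>1) ` X1 = X1"
    using assms(5) Qalg_iso_comp[OF assms(1,2)] by blast
  then show "\<phi>1 ` X1 = X2" "\<phi>2 ` X2 = X1"
    by (rule image_eqs_if_comp_image_eq[OF Qalg_iso_inj[OF assms(2)] assms(3,4)])+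
qed

theorem corollary5p2:
  fixes R1 M1 :: "'a::ring_1 set" and R2 M2 :: "'b::ring_1 set"
    and \<phi>1 :: "'a \<Rightarrow> 'b" and \<phi>2 :: "'b \<Rightarrow> 'a"
  assumes QA1: "Q_algebra TYPE('a)" and QA2: "Q_algebra TYPE('b)"
    and R1: "order_in R1" and R2: "order_in R2"
    and M1: "submonoid M1" "M1 \<subseteq> left_regular R1"
    and M2: "submonoid M2" "M2 \<subseteq> left_regular R2"
    and phi1: "Qalg_iso \<phi>1" and phi2: "Qalg_iso \<phi>2"
    and sub1: "\<phi>1 ` gen_group M1 \<subseteq> gen_group M2"
    and sub2: "\<phi>2 ` gen_group M2 \<subseteq> gen_group M1"
  shows
    "((\<forall>\<psi>::'a \<Rightarrow> 'a. Qalg_iso \<psi> \<and> \<psi> ` gen_group M1 \<subseteq> gen_group M1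
          \<longrightarrow> \<psi> ` gen_group M1 = gen_group M1)
      \<longrightarrow> \<phi>1 ` gen_group M1 = gen_group M2 \<and> \<phi>2 ` gen_group M2 = gen_group M1
        \<and> lmult_actions_iso (gen_group M1) (UNIV :: 'a set) (gen_group M2) (UNIV :: 'b set))
   \<and> ((M1 = gen_group M1 \<inter> integral_elems \<and> M2 = gen_group M2 \<inter> integral_elems
       \<and> (\<forall>\<psi>::'a \<Rightarrow> 'a. Qalg_iso \<psi> \<and> \<psi> ` M1 \<subseteq> M1 \<longrightarrow> \<psi> ` M1 = M1))
      \<longrightarrow> \<phi>1 ` M1 = M2 \<and> \<phi>2 ` M2 = M1
        \<and> lmult_actions_iso M1 (zspan M1) M2 (zspan M2)
        \<and> ((\<forall>x\<in>(integral_elems::'a set). \<forall>y\<in>integral_elems. x + y \<in> integral_elems)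
            \<and> (\<forall>m\<in>M1. \<forall>x\<in>(integral_elems::'a set). m * x \<in> integral_elems)
            \<and> (\<forall>x\<in>(integral_elems::'b set). \<forall>y\<in>integral_elems. x + y \<in> integral_elems)
            \<and> (\<forall>m\<in>M2. \<forall>x\<in>(integral_elems::'b set). m * x \<in> integral_elems)
           \<longrightarrow> lmult_actions_iso M1 (integral_elems::'a set) M2 (integral_elems::'b set)))"
proof (intro conjI impI; (elim conjE)?)
  assume "\<forall>\<psi>::'a \<Rightarrow> 'a. Qalg_iso \<psi> \<and> \<psi> ` gen_group M1 \<subseteq> gen_group M1
            \<longrightarrow> \<psi> ` gen_group M1 = gen_group M1"
  note eqs = Qalg_iso_images_eq_if_endo_surjective[OF phi1 phi2 sub1 sub2 this]
  show "\<phi>1 ` gen_group M1 = gen_group M2" "\<phi>2 ` gen_group M2 = gen_group M1"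
    by (rule eqs)+
  show "lmult_actions_iso (gen_group M1) (UNIV :: 'a set) (gen_group M2) (UNIV :: 'b set)"
    using lmult_actions_iso_Qalg_iso[OF phi1 eqs(1)] Qalg_iso_surj[OF phi1] by blast
next
  assume N1: "M1 = gen_group M1 \<inter> integral_elems" and N2: "M2 = gen_group M2 \<inter> integral_elems"
    and S: "\<forall>\<psi>::'a \<Rightarrow> 'a. Qalg_iso \<psi> \<and> \<psi> ` M1 \<subseteq> M1 \<longrightarrow> \<psi> ` M1 = M1"
  have "\<phi>1 ` M1 \<subseteq> M2" "\<phi>2 ` M2 \<subseteq> M1"
    using Qalg_iso_image_Int_integral_elems[OF phi1 sub1]
      Qalg_iso_image_Int_integral_elems[OF phi2 sub2] N1 N2 by simp_all
  note eqs = Qalg_iso_images_eq_if_endo_surjective[OF phi1 phi2 this S]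
  show "\<phi>1 ` M1 = M2" "\<phi>2 ` M2 = M1"
    by (rule eqs)+
  show "lmult_actions_iso M1 (zspan M1) M2 (zspan M2)"
    using lmult_actions_iso_Qalg_iso[OF phi1 eqs(1)
        Qalg_iso_image_zspan[OF phi1, of M1, unfolded eqs(1)]] .
  show "lmult_actions_iso M1 (integral_elems::'a set) M2 (integral_elems::'b set)"
    using lmult_actions_iso_Qalg_iso[OF phi1 eqs(1) Qalg_iso_image_integral_elems[OF phi1]] .
qed

end
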